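(* Let $(V,f)$ be a cubic space with $\mathrm{rrk}(f)=\infty$. Given a good table $T$ with $r$ rows, there is a good table $T'\supset T$ obtained by adding a new $(r+1)$-st row (consisting of a new element $v_{r+1}$ and no $w$'s).
   Context: $k$ is algebraically closed of characteristic different from $2,3$. For $V$ with basis and dual coordinates $x_i$, $P_n(V)$ is the space of formal, possibly infinite, $k$-linear combinations of degree-$n$ monomials in the $x_i$. The strength of a homogeneous $h\in P_n(V)$, $n\ge1$, is the least $s$ with $h=\sum_{i=1}^s a_ib_i$, $a_i,b_i$ homogeneous of positive degree less than $n$ ($\infty$ if none). $P_2^\circ(V)$ is the subspace of finite-strength quadratic forms and $\overline{P}_2(V)=P_2(V)/P_2^\circ(V)$. For $v\in V$, $f_v=\partial_vf\in P_2(V)$ is the directional derivative (in coordinates $\partial_{v_i}f=\partial f/\partial x_i$), and $\overline{q}(v)$ is the image of $f_v$ in $\overline{P}_2(V)$; $\overline{Q}=\overline{q}(V)$, and $\mathrm{rrk}(f)=\dim\overline{Q}$. $\langle-,-,-\rangle_f$ is the symmetric trilinear form on $V$ with $\langle v,v,v\rangle_f=f(v)$; then $f_v(w)=3\langle v,w,w\rangle_f$. A good table is a finite table with rows $v_i\mid w_{i,1},\dots,w_{i,n_i}$ ($1\le i\le r$, $n_i\ge0$), entries in $V$, such that: (a) the entries are linearly independent; (b) $\langle v_i,w_{i,j},w_{i,j}\rangle_f=1$ for all $i,j$, and whenever $x,y,z$ are entries with $\langle x,y,z\rangle_f\ne0$, then up to permutation $x=v_i$ and $y=z=w_{i,j}$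 for some $i,j$; (c) the elements $\overline{q}(v_i)$ ($1\le i\le r$) together with those $\overline{q}(w_{i,j})$ that are nonzero are pairwise distinct and linearly independent in $\overline{Q}$. *)

theory Defs
  imports "HOL-Library.Multiset" "HOL-Library.Extended_Nat" "HOL-Computational_Algebra.Polynomial"
begin

text \<open>The space V has basis indexed by the type 'i; its elements are finitely
supported coordinate vectors 'i \<Rightarrow> 'k. A monomial in the dual coordinates x_i is a
finite multiset of indices; an element of P_n(V) (formal, possibly infinite
combination of degree-n monomials) is a coefficient function on monomials which
vanishes off monomials of size n.\<close>

definition vecs :: "('i \<Rightarrow> 'k::zero) set" where
  "vecs = {v. finite {i. v i \<noteq> 0}}"

definition homog :: "nat \<Rightarrow> ('i multiset \<Rightarrow> 'k::zero) \<Rightarrow> bool" where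
  "homog n p \<longleftrightarrow> (\<forall>m. size m \<noteq> n \<longrightarrow> p m = 0)"

definition pmul :: "('i multiset \<Rightarrow> 'k::comm_ring_1) \<Rightarrow> ('i multiset \<Rightarrow> 'k) \<Rightarrow> 'i multiset \<Rightarrow> 'k" where
  "pmul a b = (\<lambda>m. \<Sum>m1\<in>{m1. m1 \<subseteq># m}. a m1 * b (m - m1))"

definition strength_rep :: "nat \<Rightarrow> ('i multiset \<Rightarrow> 'k::comm_ring_1) \<Rightarrow> nat \<Rightarrow> bool" where
  "strength_rep n h s \<longleftrightarrow>
     (\<exists>(a :: nat \<Rightarrow> 'i multiset \<Rightarrow> 'k) (b :: nat \<Rightarrow> 'i multiset \<Rightarrow> 'k) da db.
        (\<forall>j<s. 0 < da j \<and> da j < n \<and> 0 < db j \<and> db j < n \<and>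
               homog (da j) (a j) \<and> homog (db j) (b j)) \<and>
        h = (\<lambda>m. \<Sum>j<s. pmul (a j) (b j) m))"

definition strength :: "nat \<Rightarrow> ('i multiset \<Rightarrow> 'k::comm_ring_1) \<Rightarrow> enat" where
  "strength n h = (if \<exists>s. strength_rep n h s then enat (LEAST s. strength_rep n h s) else \<infinity>)"

definition P2fin :: "('i multiset \<Rightarrow> 'k::comm_ring_1) set" where
  "P2fin = {h. homog 2 h \<and> strength 2 h \<noteq> \<infinity>}"

definition pder :: "'i \<Rightarrow> ('i multiset \<Rightarrow> 'k::comm_ring_1) \<Rightarrow> 'i multiset \<Rightarrow> 'k" where
  "pder i p = (\<lambda>m. of_nat (count m i + 1) * p (add_mset i m))"

definition dder :: "('i \<Rightarrow> 'k::comm_ring_1) \<Rightarrow> ('i multiset \<Rightarrow> 'k) \<Rightarrow> 'i multiset \<Rightarrow> 'k" where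
  "dder v p = (\<lambda>m. \<Sum>i\<in>{i. v i \<noteq> 0}. v i * pder i p m)"

text \<open>Symmetric trilinear form with <v,v,v>_f = f(v): (1/6) d_u d_v d_w f.\<close>
definition tri :: "('i multiset \<Rightarrow> 'k::field) \<Rightarrow> ('i \<Rightarrow> 'k) \<Rightarrow> ('i \<Rightarrow> 'k) \<Rightarrow> ('i \<Rightarrow> 'k) \<Rightarrow> 'k" where
  "tri f u v w = dder u (dder v (dder w f)) {#} / 6"

text \<open>The family qbar(vs!0), ..., qbar(vs!(n-1)) is linearly independent in
  the quotient P_2/P_2^\<circ>.\<close>
definition qbar_lin_indep :: "('i multiset \<Rightarrow> 'k::field) \<Rightarrow> ('i \<Rightarrow> 'k) list \<Rightarrow> bool" where
  "qbar_lin_indep f vs \<longleftrightarrow>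
     (\<forall>c :: nat \<Rightarrow> 'k. (\<lambda>m. \<Sum>j<length vs. c j * dder (vs!j) f m) \<in> P2fin
        \<longrightarrow> (\<forall>j<length vs. c j = 0))"

text \<open>rrk(f) = dim Qbar = \<infinity>: Qbar is not spanned by finitely many qbar(u).\<close>
definition rrk_infinite :: "('i multiset \<Rightarrow> 'k::field) \<Rightarrow> bool" where
  "rrk_infinite f \<longleftrightarrow>
     \<not> (\<exists>S. finite S \<and> S \<subseteq> vecs \<and>
          (\<forall>v\<in>vecs. \<exists>c :: ('i \<Rightarrow> 'k) \<Rightarrow> 'k.
             (\<lambda>m. dder v f m - (\<Sum>u\<in>S. c u * dder u f m)) \<in> P2fin))"

definition lin_indep_vecs :: "('i \<Rightarrow> 'k::field) list \<Rightarrow> bool" where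
  "lin_indep_vecs es \<longleftrightarrow>
     (\<forall>c :: nat \<Rightarrow> 'k. (\<forall>i. (\<Sum>j<length es. c j * (es!j) i) = 0) \<longrightarrow> (\<forall>j<length es. c j = 0))"

text \<open>A table is a list of rows (v_i, [w_i1, ..., w_in_i]).\<close>
definition entries :: "(('i \<Rightarrow> 'k) \<times> ('i \<Rightarrow> 'k) list) list \<Rightarrow> ('i \<Rightarrow> 'k) list" where
  "entries T = concat (map (\<lambda>(v, ws). v # ws) T)"

definition good_table :: "('i multiset \<Rightarrow> 'k::field) \<Rightarrow> (('i \<Rightarrow> 'k) \<times> ('i \<Rightarrow> 'k) list) list \<Rightarrow> bool" where
  "good_table f T \<longleftrightarrow>
     set (entries T) \<subseteq> vecs \<and>
     lin_indep_vecs (entries T) \<and>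
     (\<forall>(v, ws)\<in>set T. \<forall>w\<in>set ws. tri f v w w = 1) \<and>
     (\<forall>x\<in>set (entries T). \<forall>y\<in>set (entries T). \<forall>z\<in>set (entries T).
        tri f x y z \<noteq> 0 \<longrightarrow> (\<exists>(v, ws)\<in>set T. \<exists>w\<in>set ws. {#x, y, z#} = {#v, w, w#})) \<and>
     (let L = map fst T @ filter (\<lambda>w. dder w f \<notin> P2fin) (concat (map snd T)) in
        (\<forall>j<length L. \<forall>k<length L. j \<noteq> k \<longrightarrow>
            (\<lambda>m. dder (L!j) f m - dder (L!k) f m) \<notin> P2fin) \<and>
        qbar_lin_indep f L)"

end

theory Submission
  imports Defs
begin

text \<open>Partial derivatives commute, so \<open>tri f\<close> is a symmetric trilinear form. Because
  \<open>rrk f = \<infinity>\<close>, one can impose finitely many linear conditions on \<open>x\<close> and still keep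
  \<open>qbar x\<close> outside any prescribed finite span. Iterating this gives \<open>u\<^sub>1, \<dots>, u\<^sub>M\<close>, each
  qbar-independent of the table entries and the earlier \<open>u\<^sub>j\<close>, with \<open>tri(u\<^sub>k, p, q) = 0\<close> for
  all those \<open>p, q\<close>. For \<open>v = \<Sum> \<gamma>\<^sub>i u\<^sub>i\<close> this forces \<open>tri(v, e, e') = 0\<close> on entries, while
  \<open>tri(v, v, e) = \<Sum> \<gamma>\<^sub>i\<^sup>2 tri(u\<^sub>i, u\<^sub>i, e)\<close> is linear in the squares \<open>\<gamma>\<^sub>i\<^sup>2\<close>. With
  \<open>M = 2(n + 1)\<close> for \<open>n\<close> entries, these \<open>n\<close> conditions have two nonzero solutions
  \<open>\<alpha>\<^sup>2, \<beta>\<^sup>2\<close> with disjoint supports; along \<open>\<gamma> = \<alpha> + s\<beta>\<close> the squares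
  \<open>\<gamma>\<^sup>2 = \<alpha>\<^sup>2 + s\<^sup>2\<beta>\<^sup>2\<close> remain solutions, and \<open>tri(v, v, v)\<close> is a cubic in \<open>s\<close>, which has a
  root over an algebraically closed field (if it is constant, \<open>\<gamma> = \<beta>\<close> works).\<close>

section \<open>Symmetry and multilinearity of the trilinear form\<close>

lemma pder_commute: "pder i (pder j p) = pder j (pder i p)"
  unfolding pder_def by (cases "i = j") (auto simp: add_mset_commute algebra_simps)

lemma pder_sum: "pder i (\<lambda>m. \<Sum>j\<in>J. a j * p j m) = (\<lambda>m. \<Sum>j\<in>J. a j * pder i (p j) m)"
  unfolding pder_def by (simp add: sum_distrib_left algebra_simps)

lemma dder_commute: "dder u (dder v p) = dder v (dder u p)"
proof (cases "finite {i. u i \<noteq> 0} \<and> finite {i. v i \<noteq> 0}")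
  case True
  show ?thesis
    unfolding dder_def pder_sum
    by (simp add: sum_distrib_left sum.swap[of _ "{i. u i \<noteq> 0}"] pder_commute mult.left_commute)
next
  case False
  \<comment> \<open>a direction outside \<open>vecs\<close> gives \<open>dder = 0\<close>, since sums over infinite sets are \<open>0\<close>\<close>
  then show ?thesis unfolding dder_def pder_def by auto
qed

lemma tri_swap12: "tri f u v w = tri f v u w"
  unfolding tri_def by (simp add: dder_commute)

lemma tri_swap23: "tri f u v w = tri f u w v"
  unfolding tri_def by (simp add: dder_commute)

lemma vecs_add_scaled:
  fixes x y :: "'i \<Rightarrow> 'k::field"
  assumes "x \<in> vecs" "y \<in> vecs"
  shows "(\<lambda>i. x i + c * y i) \<in> vecs"
proof -
  have "{i. x i + c * y i \<noteq> 0} \<subseteq> {i. x i \<noteq> 0} \<union> {i. y i \<noteq> 0}" by force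
  then show ?thesis using assms unfolding vecs_def by (auto intro: finite_subset)
qed

lemma dder_eq_sum_superset:
  assumes "finite F" "{i. v i \<noteq> 0} \<subseteq> F"
  shows "dder v p m = (\<Sum>i\<in>F. v i * pder i p m)"
  unfolding dder_def using assms by (intro sum.mono_neutral_left) auto

lemma dder_add_scaled:
  assumes "x \<in> vecs" "y \<in> vecs"
  shows "dder (\<lambda>i. x i + c * y i) p m = dder x p m + c * dder y p m"
proof -
  let ?F = "{i. x i \<noteq> 0} \<union> {i. y i \<noteq> 0}"
  have "finite ?F" using assms unfolding vecs_def by auto
  then show ?thesis
    by (subst (1 2 3) dder_eq_sum_superset[of ?F])
       (auto simp: sum.distrib sum_distrib_left algebra_simps)
qed

lemma tri_add_scaled_left:
  "x \<in> vecs \<Longrightarrow> y \<in> vecs \<Longrightarrow> tri f (\<lambda>i. x i + c * y i) v w = tri f x v w + c * tri f y v w"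
  unfolding tri_def by (simp add: dder_add_scaled add_divide_distrib)

definition lincomb :: "(nat \<Rightarrow> 'k::comm_ring_1) \<Rightarrow> ('i \<Rightarrow> 'k) list \<Rightarrow> 'i \<Rightarrow> 'k" where
  "lincomb a us i = (\<Sum>j<length us. a j * (us!j) i)"

lemma finite_UN_supports:
  assumes "set us \<subseteq> vecs"
  shows "finite (\<Union>j<length us. {i. (us!j) i \<noteq> 0})"
  using assms nth_mem unfolding vecs_def by blast

lemma lincomb_in_vecs:
  fixes us :: "('i \<Rightarrow> 'k::field) list"
  assumes "set us \<subseteq> vecs"
  shows "lincomb a us \<in> vecs"
proof -
  have "{i. lincomb a us i \<noteq> 0} \<subseteq> (\<Union>j<length us. {i. (us!j) i \<noteq> 0})"
    unfolding lincomb_def by (auto intro: ccontr simp: sum.neutral)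
  with finite_UN_supports[OF assms] show ?thesis
    unfolding vecs_def by (auto intro: finite_subset)
qed

lemma dder_lincomb:
  fixes us :: "('i \<Rightarrow> 'k::field) list"
  assumes "set us \<subseteq> vecs"
  shows "dder (lincomb a us) p m = (\<Sum>j<length us. a j * dder (us!j) p m)"
proof -
  let ?F = "\<Union>j<length us. {i. (us!j) i \<noteq> 0}"
  have F: "finite ?F" using finite_UN_supports[OF assms] .
  have "dder (lincomb a us) p m = (\<Sum>i\<in>?F. lincomb a us i * pder i p m)"
    by (rule dder_eq_sum_superset[OF F]) (auto intro: ccontr simp: lincomb_def sum.neutral)
  also have "\<dots> = (\<Sum>j<length us. a j * (\<Sum>i\<in>?F. (us!j) i * pder i p m))"
    by (simp add: lincomb_def sum_distrib_left sum_distrib_right sum.swap[of _ "{..<length us}"] algebra_simps)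
  also have "\<dots> = (\<Sum>j<length us. a j * dder (us!j) p m)"
    by (intro sum.cong refl) (subst dder_eq_sum_superset[OF F], auto)
  finally show ?thesis .
qed

lemma tri_lincomb_left:
  "set us \<subseteq> vecs \<Longrightarrow> tri f (lincomb a us) v w = (\<Sum>j<length us. a j * tri f (us!j) v w)"
  unfolding tri_def by (simp add: dder_lincomb sum_divide_distrib)

lemma tri_pencil_cubic:
  assumes "A \<in> vecs" "B \<in> vecs"
  shows "tri f (\<lambda>i. A i + s * B i) (\<lambda>i. A i + s * B i) (\<lambda>i. A i + s * B i) =
    poly [:tri f A A A, 3 * tri f A A B, 3 * tri f A B B, tri f B B B:] s"
proof -
  have mid: "tri f u (\<lambda>i. A i + s * B i) w = tri f u A w + s * tri f u B w" for u w
    using tri_add_scaled_left[OF assms, of f s u w] tri_swap12 by metis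
  have right: "tri f u v (\<lambda>i. A i + s * B i) = tri f u v A + s * tri f u v B" for u v
    using mid[of u v] tri_swap23 by metis
  show ?thesis
    by (simp add: tri_add_scaled_left[OF assms] mid right algebra_simps
        tri_swap23[of f A B A] tri_swap12[of f B A A] tri_swap12[of f B A B] tri_swap23[of f B B A])
qed

section \<open>Classes modulo finite-strength quadratic forms\<close>

lemma P2fin_iff: "h \<in> P2fin \<longleftrightarrow> homog 2 h \<and> (\<exists>s. strength_rep 2 h s)"
  unfolding P2fin_def strength_def by auto

lemma zero_in_P2fin: "(\<lambda>m. 0) \<in> P2fin"
proof -
  have "strength_rep 2 (\<lambda>m. 0) 0"
    unfolding strength_rep_def
    by (rule exI[of _ "\<lambda>_ _. 0"], rule exI[of _ "\<lambda>_ _. 0"], rule exI[of _ "\<lambda>_. 1"],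
        rule exI[of _ "\<lambda>_. 1"]) simp
  then show ?thesis unfolding P2fin_iff homog_def by auto
qed

lemma P2fin_scale:
  fixes h :: "'i multiset \<Rightarrow> 'k::field"
  assumes "h \<in> P2fin"
  shows "(\<lambda>m. a * h m) \<in> P2fin"
proof -
  from assms obtain s where "homog 2 h" and "strength_rep 2 h s" unfolding P2fin_iff by auto
  then obtain A B :: "nat \<Rightarrow> 'i multiset \<Rightarrow> 'k" and da db where
    degs: "\<forall>j<s. 0 < da j \<and> da j < 2 \<and> 0 < db j \<and> db j < 2 \<and> homog (da j) (A j) \<and> homog (db j) (B j)"
    and h: "h = (\<lambda>m. \<Sum>j<s. pmul (A j) (B j) m)"
    unfolding strength_rep_def by blast
  let ?aA = "\<lambda>j m. a * A j m"
  have "(\<lambda>m. a * h m) = (\<lambda>m. \<Sum>j<s. pmul (?aA j) (B j) m)"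
    unfolding h pmul_def by (simp add: sum_distrib_left mult.assoc)
  moreover have "\<forall>j<s. homog (da j) (?aA j)" using degs unfolding homog_def by auto
  ultimately have "strength_rep 2 (\<lambda>m. a * h m) s"
    using degs unfolding strength_rep_def
    by (intro exI[of _ ?aA] exI[of _ B] exI[of _ da] exI[of _ db]) auto
  with \<open>homog 2 h\<close> show ?thesis unfolding P2fin_iff homog_def by auto
qed

lemma sum_lessThan_append:
  "(\<Sum>i<length (xs @ ys). h i ((xs @ ys) ! i)) =
   (\<Sum>i<length xs. h i (xs ! i)) + (\<Sum>i<length ys. h (length xs + i) (ys ! i))"
proof -
  have "(\<Sum>i<m + n. F i) = (\<Sum>i<m. F i) + (\<Sum>i<n. F (m + i))" for m n and F :: "nat \<Rightarrow> 'a"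
    by (induction n) (simp_all add: add.assoc)
  then show ?thesis by (simp add: nth_append)
qed

definition qbar_outside_span :: "('i multiset \<Rightarrow> 'k::field) \<Rightarrow> ('i \<Rightarrow> 'k) list \<Rightarrow> ('i \<Rightarrow> 'k) \<Rightarrow> bool" where
  "qbar_outside_span f L v \<longleftrightarrow>
     (\<forall>c. (\<lambda>m. dder v f m - (\<Sum>j<length L. c j * dder (L!j) f m)) \<notin> P2fin)"

lemma lincomb_list_as_set:
  fixes c :: "nat \<Rightarrow> 'k::comm_ring_1"
  obtains C where "\<And>g. (\<Sum>j<length L. c j * g (L!j)) = (\<Sum>u\<in>set L. C u * g u)"
proof
  fix g :: "'a \<Rightarrow> 'k"
  let ?C = "\<lambda>u. \<Sum>j\<in>{j. j \<in> {..<length L} \<and> L!j = u}. c j"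
  have "(\<Sum>u\<in>set L. ?C u * g u) = (\<Sum>u\<in>set L. \<Sum>j\<in>{j. j \<in> {..<length L} \<and> L!j = u}. c j * g (L!j))"
    by (auto simp: sum_distrib_right intro!: sum.cong)
  also have "\<dots> = (\<Sum>j<length L. c j * g (L!j))"
    by (rule sum.group) auto
  finally show "(\<Sum>j<length L. c j * g (L!j)) = (\<Sum>u\<in>set L. ?C u * g u)" ..
qed

lemma lincomb_list_reindex:
  fixes c :: "nat \<Rightarrow> 'k::comm_ring_1"
  assumes "set L \<subseteq> set E"
  obtains c' where "\<And>g. (\<Sum>i<length L. c i * g (L!i)) = (\<Sum>j<length E. c' j * g (E!j))"
proof -
  have "\<forall>i<length L. \<exists>j<length E. E ! j = L!i"
    using assms by (auto simp: in_set_conv_nth[symmetric])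
  then obtain idx where idx: "\<And>i. i < length L \<Longrightarrow> idx i < length E \<and> E ! idx i = L!i"
    by metis
  let ?c' = "\<lambda>j. \<Sum>i\<in>{i. i \<in> {..<length L} \<and> idx i = j}. c i"
  have "(\<Sum>i<length L. c i * g (L!i)) = (\<Sum>j<length E. ?c' j * g (E!j))" for g :: "'a \<Rightarrow> 'k"
  proof -
    have "(\<Sum>j<length E. ?c' j * g (E!j)) =
          (\<Sum>j<length E. \<Sum>i\<in>{i. i \<in> {..<length L} \<and> idx i = j}. c i * g (E ! idx i))"
      by (auto simp: sum_distrib_right intro!: sum.cong)
    also have "\<dots> = (\<Sum>i<length L. c i * g (E ! idx i))"
      by (rule sum.group) (use idx in auto)
    also have "\<dots> = (\<Sum>i<length L. c i * g (L!i))"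
      using idx by (auto intro!: sum.cong)
    finally show ?thesis ..
  qed
  then show ?thesis by (rule that)
qed

lemma qbar_outside_span_subset:
  fixes f :: "'i multiset \<Rightarrow> 'k::field"
  assumes "qbar_outside_span f E v" "set L \<subseteq> set E"
  shows "qbar_outside_span f L v"
  unfolding qbar_outside_span_def
proof
  fix c :: "nat \<Rightarrow> 'k"
  obtain c' where c': "\<And>g. (\<Sum>i<length L. c i * g (L!i)) = (\<Sum>j<length E. c' j * g (E!j))"
    using lincomb_list_reindex[OF assms(2), where c = c] by blast
  have eq: "(\<lambda>m. dder v f m - (\<Sum>j<length L. c j * dder (L!j) f m)) =
             (\<lambda>m. dder v f m - (\<Sum>j<length E. c' j * dder (E!j) f m))"
  proof
    fix m
    show "dder v f m - (\<Sum>j<length L. c j * dder (L!j) f m) =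
          dder v f m - (\<Sum>j<length E. c' j * dder (E!j) f m)"
      using c'[of "\<lambda>u. dder u f m"] by simp
  qed
  show "(\<lambda>m. dder v f m - (\<Sum>j<length L. c j * dder (L!j) f m)) \<notin> P2fin"
    unfolding eq using assms(1) unfolding qbar_outside_span_def by blast
qed

lemma rrk_infinite_exists_outside_span:
  fixes f :: "'i multiset \<Rightarrow> 'k::field"
  assumes "rrk_infinite f" "set L \<subseteq> vecs"
  shows "\<exists>v\<in>vecs. qbar_outside_span f L v"
proof -
  have "\<not> (\<forall>v\<in>vecs. \<exists>C. (\<lambda>m. dder v f m - (\<Sum>u\<in>set L. C u * dder u f m)) \<in> P2fin)"
    using assms finite_set[of L] unfolding rrk_infinite_def by blast
  then obtain v where "v \<in> vecs" and v: "\<And>C. (\<lambda>m. dder v f m - (\<Sum>u\<in>set L. C u * dder u f m)) \<notin> P2fin"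
    by blast
  have "qbar_outside_span f L v"
    unfolding qbar_outside_span_def
  proof
    fix c :: "nat \<Rightarrow> 'k"
    obtain C where C: "\<And>g. (\<Sum>j<length L. c j * g (L!j)) = (\<Sum>u\<in>set L. C u * g u)"
      using lincomb_list_as_set[where c = c] by blast
    have eq: "(\<lambda>m. dder v f m - (\<Sum>j<length L. c j * dder (L!j) f m)) =
               (\<lambda>m. dder v f m - (\<Sum>u\<in>set L. C u * dder u f m))"
    proof
      fix m
      show "dder v f m - (\<Sum>j<length L. c j * dder (L!j) f m) =
            dder v f m - (\<Sum>u\<in>set L. C u * dder u f m)"
        using C[of "\<lambda>u. dder u f m"] by simp
    qed
    show "(\<lambda>m. dder v f m - (\<Sum>j<length L. c j * dder (L!j) f m)) \<notin> P2fin"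
      unfolding eq by (rule v)
  qed
  with \<open>v \<in> vecs\<close> show ?thesis by blast
qed

lemma qbar_outside_span_add_lincomb:
  fixes f :: "'i multiset \<Rightarrow> 'k::field"
  assumes out: "qbar_outside_span f (L @ M) x"
    and x: "x \<in> vecs" and M: "set M \<subseteq> vecs" and "a \<noteq> 0"
  shows "qbar_outside_span f L (\<lambda>i. lincomb b M i + a * x i)"
  unfolding qbar_outside_span_def
proof
  fix c :: "nat \<Rightarrow> 'k"
  let ?y = "lincomb b M"
  let ?L = "\<lambda>m. \<Sum>j<length L. c j * dder (L!j) f m"
  define c' where "c' j = (if j < length L then c j / a else - b (j - length L) / a)" for j
  have y: "?y \<in> vecs" using M by (rule lincomb_in_vecs)
  note dy = dder_lincomb[OF M]
  have c'_sum: "(\<Sum>j<length (L @ M). c' j * dder ((L @ M)!j) f m) =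
      (\<Sum>j<length L. c j / a * dder (L!j) f m) + (\<Sum>j<length M. - b j / a * dder (M!j) f m)" for m
    unfolding sum_lessThan_append[where h = "\<lambda>j u. c' j * dder u f m"] by (simp add: c'_def)
  have eq: "(\<lambda>m. (1 / a) * (dder (\<lambda>i. ?y i + a * x i) f m - ?L m)) =
            (\<lambda>m. dder x f m - (\<Sum>j<length (L @ M). c' j * dder ((L @ M)!j) f m))"
  proof
    fix m
    have "(\<Sum>j<length L. c j / a * dder (L!j) f m) = (\<Sum>j<length L. c j * dder (L!j) f m) / a"
         "(\<Sum>j<length M. - b j / a * dder (M!j) f m) = - (\<Sum>j<length M. b j * dder (M!j) f m) / a"
      by (simp_all add: sum_divide_distrib sum_negf)
    then show "(1 / a) * (dder (\<lambda>i. ?y i + a * x i) f m - ?L m) =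
        dder x f m - (\<Sum>j<length (L @ M). c' j * dder ((L @ M)!j) f m)"
      unfolding dder_add_scaled[OF y x] dy c'_sum using \<open>a \<noteq> 0\<close> by (simp add: field_simps)
  qed
  show "(\<lambda>m. dder (\<lambda>i. ?y i + a * x i) f m - ?L m) \<notin> P2fin"
  proof
    assume "(\<lambda>m. dder (\<lambda>i. ?y i + a * x i) f m - ?L m) \<in> P2fin"
    from P2fin_scale[OF this, of "1 / a"] out show False
      unfolding eq qbar_outside_span_def by blast
  qed
qed

lemma not_qbar_outside_span_zero: "\<not> qbar_outside_span f [] (\<lambda>i. 0)"
proof -
  have "dder (\<lambda>i. 0) f = (\<lambda>m. 0)" unfolding dder_def by simp
  then show ?thesis unfolding qbar_outside_span_def using zero_in_P2fin by simp
qed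

lemma lin_indep_vecs_snoc:
  fixes f :: "'i multiset \<Rightarrow> 'k::field"
  assumes indep: "lin_indep_vecs E" and "set E \<subseteq> vecs" "v \<in> vecs"
    and out: "qbar_outside_span f E v"
  shows "lin_indep_vecs (E @ [v])"
  unfolding lin_indep_vecs_def
proof (rule allI, rule impI)
  fix c :: "nat \<Rightarrow> 'k"
  assume dep: "\<forall>i. (\<Sum>j<length (E @ [v]). c j * ((E @ [v])!j) i) = 0"
  have rel: "(\<lambda>i. lincomb c E i + c (length E) * v i) = (\<lambda>i. 0)"
  proof
    fix i
    show "lincomb c E i + c (length E) * v i = 0"
      using dep[rule_format, of i] unfolding sum_lessThan_append[where h = "\<lambda>j u. c j * u i"]
      by (simp add: lincomb_def)
  qed
  have "c (length E) = 0"
  proof (rule ccontr)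
    assume "c (length E) \<noteq> 0"
    with out assms(2,3) have "qbar_outside_span f [] (\<lambda>i. lincomb c E i + c (length E) * v i)"
      by (intro qbar_outside_span_add_lincomb) auto
    then show False unfolding rel by (simp add: not_qbar_outside_span_zero)
  qed
  with rel have "\<forall>i. (\<Sum>j<length E. c j * (E!j) i) = 0"
    by (simp add: fun_eq_iff lincomb_def)
  with indep have "\<forall>j<length E. c j = 0"
    unfolding lin_indep_vecs_def by blast
  with \<open>c (length E) = 0\<close> show "\<forall>j<length (E @ [v]). c j = 0"
    by (auto simp: less_Suc_eq)
qed

definition linear_on_vecs :: "(('i \<Rightarrow> 'k::field) \<Rightarrow> 'k) \<Rightarrow> bool" where
  "linear_on_vecs \<phi> \<longleftrightarrow> (\<forall>x\<in>vecs. \<forall>y\<in>vecs. \<forall>c. \<phi> (\<lambda>i. x i + c * y i) = \<phi> x + c * \<phi> y)"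

lemma exists_outside_span_in_kernels:
  fixes f :: "'i multiset \<Rightarrow> 'k::field"
  assumes rrk: "rrk_infinite f" and lin: "\<forall>\<phi>\<in>set \<phi>s. linear_on_vecs \<phi>"
  shows "set L \<subseteq> vecs \<Longrightarrow> \<exists>x\<in>vecs. (\<forall>\<phi>\<in>set \<phi>s. \<phi> x = 0) \<and> qbar_outside_span f L x"
  using lin
proof (induction \<phi>s arbitrary: L)
  case Nil
  then show ?case using rrk_infinite_exists_outside_span[OF rrk] by simp
next
  case (Cons \<phi> \<phi>s)
  obtain x1 where x1: "x1 \<in> vecs" "\<forall>\<psi>\<in>set \<phi>s. \<psi> x1 = 0" "qbar_outside_span f L x1"
    using Cons.IH[of L] Cons.prems by auto
  show ?case
  proof (cases "\<phi> x1 = 0")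
    case True
    with x1 show ?thesis by auto
  next
    case False
    \<comment> \<open>\<open>x2 + t x1\<close> stays outside the span of \<open>L\<close> for every \<open>t\<close>; choose \<open>t\<close> to kill \<open>\<phi>\<close>\<close>
    obtain x2 where x2: "x2 \<in> vecs" "\<forall>\<psi>\<in>set \<phi>s. \<psi> x2 = 0" "qbar_outside_span f (L @ [x1]) x2"
      using Cons.IH[of "L @ [x1]"] Cons.prems x1(1) by auto
    define t where "t = - \<phi> x2 / \<phi> x1"
    let ?x = "\<lambda>i. x2 i + t * x1 i"
    have "qbar_outside_span f L (\<lambda>i. lincomb (\<lambda>_. t) [x1] i + 1 * x2 i)"
      using x1(1) x2 by (intro qbar_outside_span_add_lincomb) auto
    moreover have "(\<lambda>i. lincomb (\<lambda>_. t) [x1] i + 1 * x2 i) = ?x"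
      by (simp add: lincomb_def add.commute)
    ultimately have out: "qbar_outside_span f L ?x" by simp
    have lin: "\<psi> ?x = \<psi> x2 + t * \<psi> x1" if "\<psi> \<in> set (\<phi> # \<phi>s)" for \<psi>
      using Cons.prems that x1(1) x2(1) unfolding linear_on_vecs_def by blast
    have "\<phi> ?x = 0" using lin[of \<phi>] False by (simp add: t_def)
    moreover have "\<psi> ?x = 0" if "\<psi> \<in> set \<phi>s" for \<psi>
    proof -
      have "\<psi> x1 = 0" "\<psi> x2 = 0" using that x1(2) x2(2) by blast+
      with lin[of \<psi>] that show ?thesis by simp
    qed
    ultimately show ?thesis using out vecs_add_scaled[OF x2(1) x1(1)] by auto
  qed
qed

lemma qbar_chain_lincomb_outside_span:
  fixes f :: "'i multiset \<Rightarrow> 'k::field"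
  assumes us: "set us \<subseteq> vecs"
    and chain: "\<forall>k<length us. qbar_outside_span f (E @ take k us) (us!k)"
    and nonzero: "\<exists>i<length us. a i \<noteq> 0"
  shows "qbar_outside_span f E (lincomb a us)"
proof -
  define n where "n = Max {i. i < length us \<and> a i \<noteq> 0}"
  have n: "n < length us" "a n \<noteq> 0" and above: "\<And>i. n < i \<Longrightarrow> i < length us \<Longrightarrow> a i = 0"
    using Max_in[of "{i. i < length us \<and> a i \<noteq> 0}"] Max_ge[of "{i. i < length us \<and> a i \<noteq> 0}"]
      nonzero unfolding n_def by fastforce+
  have eq: "lincomb a us = (\<lambda>t. lincomb a (take n us) t + a n * (us!n) t)"
  proof
    fix t
    have "(\<Sum>i<length us. a i * (us!i) t) = (\<Sum>i<Suc n. a i * (us!i) t)"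
      using n above by (intro sum.mono_neutral_right) auto
    also have "\<dots> = (\<Sum>j<length (take n us). a j * (take n us ! j) t) + a n * (us!n) t"
      using n by simp
    finally show "lincomb a us t = lincomb a (take n us) t + a n * (us!n) t"
      by (simp add: lincomb_def)
  qed
  have "qbar_outside_span f E (\<lambda>t. lincomb a (take n us) t + a n * (us!n) t)"
    using chain n us by (intro qbar_outside_span_add_lincomb) (auto dest: in_set_takeD)
  then show ?thesis unfolding eq .
qed

section \<open>Linear algebra\<close>

lemma homogeneous_system_nontrivial_solution:
  fixes cs :: "(nat \<Rightarrow> 'k::field) list"
  assumes "finite I" "length cs < card I"
  shows "\<exists>b. (\<exists>i\<in>I. b i \<noteq> 0) \<and> (\<forall>c\<in>set cs. (\<Sum>i\<in>I. c i * b i) = 0)"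
  using assms
proof (induction cs arbitrary: I)
  case Nil
  then obtain i where "i \<in> I" by fastforce
  then show ?case by (intro exI[of _ "\<lambda>_. 1"]) auto
next
  case (Cons c cs)
  have solution_vanishing_at: "\<exists>b i. i \<in> I - {i0} \<and> b i \<noteq> 0 \<and> b i0 = 0 \<and> (\<forall>d\<in>set cs. (\<Sum>i\<in>I. d i * b i) = 0)"
    if "i0 \<in> I" for i0
  proof -
    have "finite (I - {i0})" "length cs < card (I - {i0})"
      using Cons.prems that by auto
    from Cons.IH[OF this] obtain b i
      where b: "i \<in> I - {i0}" "b i \<noteq> 0" "\<forall>d\<in>set cs. (\<Sum>i\<in>I - {i0}. d i * b i) = 0"
      by blast
    have "(\<Sum>i\<in>I. d i * (b(i0 := 0)) i) = (\<Sum>i\<in>I - {i0}. d i * b i)" for d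
      using Cons.prems(1) that by (simp add: sum.remove)
    with b show ?thesis by (intro exI[of _ "b(i0 := 0)"] exI[of _ i]) simp
  qed
  obtain i0 where "i0 \<in> I" using Cons.prems by fastforce
  then obtain b1 i1 where b1: "i1 \<in> I - {i0}" "b1 i1 \<noteq> 0" "\<forall>d\<in>set cs. (\<Sum>i\<in>I. d i * b1 i) = 0"
    using solution_vanishing_at by blast
  then obtain b2 i2 where b2: "i2 \<in> I" "b2 i2 \<noteq> 0" "b2 i1 = 0" "\<forall>d\<in>set cs. (\<Sum>i\<in>I. d i * b2 i) = 0"
    using solution_vanishing_at[of i1] by blast
  show ?case
  proof (cases "(\<Sum>i\<in>I. c i * b1 i) = 0")
    case True
    with b1 show ?thesis by auto
  next
    case False
    define t where "t = (\<Sum>i\<in>I. c i * b2 i) / (\<Sum>i\<in>I. c i * b1 i)"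
    define b where "b i = b2 i - t * b1 i" for i
    have lin: "(\<Sum>i\<in>I. d i * b i) = (\<Sum>i\<in>I. d i * b2 i) - t * (\<Sum>i\<in>I. d i * b1 i)" for d
      unfolding b_def by (simp add: algebra_simps sum_subtractf sum_distrib_left)
    have "\<exists>i\<in>I. b i \<noteq> 0"
    proof (cases "t = 0")
      case True
      with b2 show ?thesis by (auto simp: b_def)
    next
      case False
      with b1 b2(3) show ?thesis by (intro bexI[of _ i1]) (auto simp: b_def)
    qed
    moreover have "(\<Sum>i\<in>I. c i * b i) = 0"
      using lin[of c] False by (simp add: t_def)
    moreover have "(\<Sum>i\<in>I. d i * b i) = 0" if "d \<in> set cs" for d
      using lin[of d] b1(3) b2(4) that by simp
    ultimately show ?thesis by auto
  qed
qed

lemma alg_closed_square_root: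
  fixes x :: "'k::field"
  assumes "\<forall>p :: 'k poly. degree p > 0 \<longrightarrow> (\<exists>x. poly p x = 0)"
  shows "\<exists>y. y * y = x"
proof -
  have "degree [:-x, 0, 1:] > 0" by simp
  then obtain y where "poly [:-x, 0, 1:] y = 0" using assms by blast
  then show ?thesis by (auto simp: algebra_simps)
qed

lemma exists_nonzero_solution_in_squares:
  fixes cs :: "(nat \<Rightarrow> 'k::field) list"
  assumes alg_closed: "\<forall>p :: 'k poly. degree p > 0 \<longrightarrow> (\<exists>x. poly p x = 0)"
    and J: "finite J" "I \<subseteq> J" and "length cs < card I"
  shows "\<exists>\<alpha>. (\<exists>i\<in>I. \<alpha> i \<noteq> 0) \<and> (\<forall>i. i \<notin> I \<longrightarrow> \<alpha> i = 0) \<and>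
              (\<forall>c\<in>set cs. (\<Sum>i\<in>J. \<alpha> i * \<alpha> i * c i) = 0)"
proof -
  obtain b where b: "\<exists>i\<in>I. b i \<noteq> 0" "\<forall>c\<in>set cs. (\<Sum>i\<in>I. c i * b i) = 0"
    using homogeneous_system_nontrivial_solution[OF finite_subset[OF J(2,1)] assms(4)] by blast
  have "\<forall>x :: 'k. \<exists>y. y * y = x" using alg_closed_square_root[OF alg_closed] by blast
  then obtain sq :: "'k \<Rightarrow> 'k" where sq: "\<And>x. sq x * sq x = x" by metis
  define \<alpha> where "\<alpha> i = (if i \<in> I then sq (b i) else 0)" for i
  have "(\<Sum>i\<in>J. \<alpha> i * \<alpha> i * c i) = (\<Sum>i\<in>I. c i * b i)" for c
  proof -
    have "(\<Sum>i\<in>J. \<alpha> i * \<alpha> i * c i) = (\<Sum>i\<in>I. \<alpha> i * \<alpha> i * c i)"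
      using J by (intro sum.mono_neutral_right) (auto simp: \<alpha>_def)
    also have "\<dots> = (\<Sum>i\<in>I. c i * b i)"
      by (intro sum.cong refl) (simp add: \<alpha>_def sq mult.commute)
    finally show ?thesis .
  qed
  moreover have "\<exists>i\<in>I. \<alpha> i \<noteq> 0"
  proof -
    obtain i where "i \<in> I" "b i \<noteq> 0" using b(1) by blast
    then have "\<alpha> i * \<alpha> i \<noteq> 0" by (simp add: \<alpha>_def sq)
    with \<open>i \<in> I\<close> show ?thesis by auto
  qed
  moreover have "\<forall>i. i \<notin> I \<longrightarrow> \<alpha> i = 0" by (simp add: \<alpha>_def)
  ultimately show ?thesis using b(2) by (intro exI[of _ \<alpha>]) auto
qed

lemma sum_lessThan_insert_nth:
  "(\<Sum>j<length (L1 @ v # L2). c j * g ((L1 @ v # L2)!j)) =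
   c (length L1) * g v +
   (\<Sum>j<length (L1 @ L2). c (if j < length L1 then j else Suc j) * g ((L1 @ L2)!j))"
  unfolding sum_lessThan_append[where h = "\<lambda>j u. c j * g u"]
    sum_lessThan_append[where h = "\<lambda>j u. c (if j < length L1 then j else Suc j) * g u"]
  by (simp add: sum.lessThan_Suc_shift add.left_commute del: sum.lessThan_Suc)

lemma qbar_lin_indep_insert:
  fixes f :: "'i multiset \<Rightarrow> 'k::field"
  assumes indep: "qbar_lin_indep f (L1 @ L2)" and out: "qbar_outside_span f (L1 @ L2) v"
  shows "qbar_lin_indep f (L1 @ v # L2)"
  unfolding qbar_lin_indep_def
proof (rule allI, rule impI)
  fix c :: "nat \<Rightarrow> 'k"
  let ?p = "length L1" and ?L = "L1 @ L2"
  define d where "d j = c (if j < ?p then j else Suc j)" for j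
  assume "(\<lambda>m. \<Sum>j<length (L1 @ v # L2). c j * dder ((L1 @ v # L2)!j) f m) \<in> P2fin"
  moreover have "\<And>m. (\<Sum>j<length (L1 @ v # L2). c j * dder ((L1 @ v # L2)!j) f m) =
      c ?p * dder v f m + (\<Sum>j<length ?L. d j * dder (?L!j) f m)"
    unfolding d_def by (rule sum_lessThan_insert_nth)
  ultimately have comb: "(\<lambda>m. c ?p * dder v f m + (\<Sum>j<length ?L. d j * dder (?L!j) f m)) \<in> P2fin"
    by simp
  have "c ?p = 0"
  proof (rule ccontr)
    assume "c ?p \<noteq> 0"
    have "(\<lambda>m. 1 / c ?p * (c ?p * dder v f m + (\<Sum>j<length ?L. d j * dder (?L!j) f m))) =
          (\<lambda>m. dder v f m - (\<Sum>j<length ?L. - d j / c ?p * dder (?L!j) f m))"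
    proof
      fix m
      have "(\<Sum>j<length ?L. - d j / c ?p * dder (?L!j) f m) = - (\<Sum>j<length ?L. d j * dder (?L!j) f m) / c ?p"
        by (simp add: sum_divide_distrib sum_negf)
      with \<open>c ?p \<noteq> 0\<close> show "1 / c ?p * (c ?p * dder v f m + (\<Sum>j<length ?L. d j * dder (?L!j) f m)) =
          dder v f m - (\<Sum>j<length ?L. - d j / c ?p * dder (?L!j) f m)"
        by (simp add: field_simps)
    qed
    with P2fin_scale[OF comb, of "1 / c ?p"]
    have "(\<lambda>m. dder v f m - (\<Sum>j<length ?L. - d j / c ?p * dder (?L!j) f m)) \<in> P2fin"
      by simp
    moreover have "(\<lambda>m. dder v f m - (\<Sum>j<length ?L. - d j / c ?p * dder (?L!j) f m)) \<notin> P2fin"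
      using out unfolding qbar_outside_span_def by (rule spec)
    ultimately show False by contradiction
  qed
  with comb have "(\<lambda>m. \<Sum>j<length ?L. d j * dder (?L!j) f m) \<in> P2fin" by simp
  with indep have d0: "\<forall>j<length ?L. d j = 0" unfolding qbar_lin_indep_def by blast
  show "\<forall>j<length (L1 @ v # L2). c j = 0"
  proof (intro allI impI)
    fix j assume "j < length (L1 @ v # L2)"
    then consider "j < ?p" | "j = ?p" | "?p < j" "j - 1 < length ?L"
      by fastforce
    then show "c j = 0"
    proof cases
      case 1
      then show ?thesis using d0[rule_format, of j] by (simp add: d_def)
    next
      case 2
      then show ?thesis using \<open>c ?p = 0\<close> by simp
    next
      case 3
      then have "Suc (j - 1) = j" "\<not> j - 1 < ?p" by auto
      with 3 show ?thesis using d0[rule_format, of "j - 1"] by (simp add: d_def)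
    qed
  qed
qed

lemma qbar_lin_indep_distinct:
  fixes f :: "'i multiset \<Rightarrow> 'k::field"
  assumes indep: "qbar_lin_indep f L" and "j < length L" "k < length L" "j \<noteq> k"
  shows "(\<lambda>m. dder (L!j) f m - dder (L!k) f m) \<notin> P2fin"
proof
  define c where "c i = (if i = j then 1 else if i = k then -1 else 0 :: 'k)" for i :: nat
  have "(\<Sum>i<length L. c i * dder (L!i) f m) = dder (L!j) f m - dder (L!k) f m" for m
  proof -
    have "(\<Sum>i<length L. c i * dder (L!i) f m) =
          (\<Sum>i<length L. (if i = j then dder (L!j) f m else 0) + (if i = k then - dder (L!k) f m else 0))"
      using assms(4) by (intro sum.cong refl) (auto simp: c_def)
    then show ?thesis using assms(2,3) by (simp add: sum.distrib)
  qed
  moreover assume "(\<lambda>m. dder (L!j) f m - dder (L!k) f m) \<in> P2fin"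
  ultimately have "(\<lambda>m. \<Sum>i<length L. c i * dder (L!i) f m) \<in> P2fin" by simp
  with indep assms(2) have "c j = 0" unfolding qbar_lin_indep_def by blast
  then show False by (simp add: c_def)
qed

section \<open>Extending a good table\<close>

lemma tri_vanishes_if_involves:
  assumes "\<forall>y\<in>S. \<forall>z\<in>S. tri f v y z = 0" "x \<in> S" "y \<in> S" "z \<in> S" "v \<in> {x, y, z}"
  shows "tri f x y z = 0"
proof -
  consider "x = v" | "y = v" | "z = v" using assms(5) by blast
  then show ?thesis
  proof cases
    case 2
    then show ?thesis using assms(1,2,4) tri_swap12[of f x v z] by simp
  next
    case 3
    then show ?thesis using assms(1,2,3) tri_swap12[of f x v y] tri_swap23[of f x y v] by simp
  qed (use assms in simp)
qed

lemma good_table_snoc: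
  fixes f :: "'i multiset \<Rightarrow> 'k::field"
  assumes good: "good_table f T" and v: "v \<in> vecs"
    and out: "qbar_outside_span f (entries T) v"
    and iso: "\<forall>y\<in>set (entries T @ [v]). \<forall>z\<in>set (entries T @ [v]). tri f v y z = 0"
  shows "good_table f (T @ [(v, [])])"
proof -
  let ?E = "entries T" and ?L1 = "map fst T"
    and ?L2 = "filter (\<lambda>w. dder w f \<notin> P2fin) (concat (map snd T))"
  have E: "set ?E \<subseteq> vecs" "lin_indep_vecs ?E"
    and rows: "\<forall>(a, ws)\<in>set T. \<forall>w\<in>set ws. tri f a w w = 1"
    and triples: "\<forall>x\<in>set ?E. \<forall>y\<in>set ?E. \<forall>z\<in>set ?E. tri f x y z \<noteq> 0 \<longrightarrow>
                    (\<exists>(a, ws)\<in>set T. \<exists>w\<in>set ws. {#x, y, z#} = {#a, w, w#})"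
    and indep: "qbar_lin_indep f (?L1 @ ?L2)"
    using good unfolding good_table_def Let_def by blast+
  have triples': "\<exists>(a, ws)\<in>set (T @ [(v, [])]). \<exists>w\<in>set ws. {#x, y, z#} = {#a, w, w#}"
    if "x \<in> set (?E @ [v])" "y \<in> set (?E @ [v])" "z \<in> set (?E @ [v])" "tri f x y z \<noteq> 0" for x y z
  proof -
    have "v \<notin> {x, y, z}" using tri_vanishes_if_involves[OF iso] that by blast
    with that have "x \<in> set ?E" "y \<in> set ?E" "z \<in> set ?E" by auto
    with triples that(4) have "\<exists>(a, ws)\<in>set T. \<exists>w\<in>set ws. {#x, y, z#} = {#a, w, w#}" by blast
    then show ?thesis by auto
  qed
  have "set (?L1 @ ?L2) \<subseteq> set ?E" by (auto simp: entries_def)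
  then have indep': "qbar_lin_indep f (?L1 @ v # ?L2)"
    by (intro qbar_lin_indep_insert indep qbar_outside_span_subset[OF out])
  have entries: "entries (T @ [(v, [])]) = ?E @ [v]" by (simp add: entries_def)
  have L: "map fst (T @ [(v, [])]) @ filter (\<lambda>w. dder w f \<notin> P2fin) (concat (map snd (T @ [(v, [])]))) =
      ?L1 @ v # ?L2" by simp
  show ?thesis
    unfolding good_table_def Let_def entries L
  proof (intro conjI)
    show "set (?E @ [v]) \<subseteq> vecs" using E(1) v by simp
    show "lin_indep_vecs (?E @ [v])" by (rule lin_indep_vecs_snoc[OF E(2,1) v out])
    show "\<forall>(a, ws)\<in>set (T @ [(v, [])]). \<forall>w\<in>set ws. tri f a w w = 1" using rows by auto
    show "\<forall>x\<in>set (?E @ [v]). \<forall>y\<in>set (?E @ [v]). \<forall>z\<in>set (?E @ [v]). tri f x y z \<noteq> 0 \<longrightarrow>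
        (\<exists>(a, ws)\<in>set (T @ [(v, [])]). \<exists>w\<in>set ws. {#x, y, z#} = {#a, w, w#})"
      using triples' by blast
    show "\<forall>j<length (?L1 @ v # ?L2). \<forall>k<length (?L1 @ v # ?L2). j \<noteq> k \<longrightarrow>
        (\<lambda>m. dder ((?L1 @ v # ?L2)!j) f m - dder ((?L1 @ v # ?L2)!k) f m) \<notin> P2fin"
      using qbar_lin_indep_distinct[OF indep'] by blast
  qed (rule indep')
qed

definition tri_orthogonal_chain ::
    "('i multiset \<Rightarrow> 'k::field) \<Rightarrow> ('i \<Rightarrow> 'k) list \<Rightarrow> ('i \<Rightarrow> 'k) list \<Rightarrow> bool" where
  "tri_orthogonal_chain f E us \<longleftrightarrow> set us \<subseteq> vecs \<and>
     (\<forall>k<length us. qbar_outside_span f (E @ take k us) (us!k) \<and>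
        (\<forall>p\<in>set (E @ take k us). \<forall>q\<in>set (E @ take k us). tri f (us!k) p q = 0))"

lemma exists_tri_orthogonal_chain:
  fixes f :: "'i multiset \<Rightarrow> 'k::field"
  assumes rrk: "rrk_infinite f" and E: "set E \<subseteq> vecs"
  shows "\<exists>us. length us = n \<and> tri_orthogonal_chain f E us"
proof (induction n)
  case 0
  show ?case by (simp add: tri_orthogonal_chain_def)
next
  case (Suc n)
  then obtain us where us: "length us = n" "tri_orthogonal_chain f E us" by blast
  let ?P = "E @ us"
  have "\<forall>\<phi>\<in>set [\<lambda>x. tri f x p q. p \<leftarrow> ?P, q \<leftarrow> ?P]. linear_on_vecs \<phi>"
    by (auto simp: linear_on_vecs_def tri_add_scaled_left)
  moreover have P: "set ?P \<subseteq> vecs" using E us(2) by (auto simp: tri_orthogonal_chain_def)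
  ultimately obtain x where x: "x \<in> vecs" "qbar_outside_span f ?P x"
      and kernel: "\<forall>\<phi>\<in>set [\<lambda>x. tri f x p q. p \<leftarrow> ?P, q \<leftarrow> ?P]. \<phi> x = 0"
    using exists_outside_span_in_kernels[OF rrk] by blast
  have orth: "\<forall>p\<in>set ?P. \<forall>q\<in>set ?P. tri f x p q = 0"
  proof (intro ballI)
    fix p q assume "p \<in> set ?P" "q \<in> set ?P"
    then have "(\<lambda>x. tri f x p q) \<in> set [\<lambda>x. tri f x p q. p \<leftarrow> ?P, q \<leftarrow> ?P]" by auto
    with kernel show "tri f x p q = 0" by fastforce
  qed
  have step: "qbar_outside_span f (E @ take k (us @ [x])) ((us @ [x])!k) \<and>
      (\<forall>p\<in>set (E @ take k (us @ [x])). \<forall>q\<in>set (E @ take k (us @ [x])). tri f ((us @ [x])!k) p q = 0)"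
    if "k < Suc n" for k
  proof (cases "k < n")
    case True
    then show ?thesis using us unfolding tri_orthogonal_chain_def by (simp add: nth_append)
  next
    case False
    with that have "k = n" by simp
    then show ?thesis using us(1) x(2) orth by (simp add: nth_append)
  qed
  have "tri_orthogonal_chain f E (us @ [x])"
    unfolding tri_orthogonal_chain_def using P x(1) step us(1) by auto
  with us(1) show ?case by (intro exI[of _ "us @ [x]"]) simp
qed

lemma tri_orthogonal_chain_offdiag:
  assumes chain: "tri_orthogonal_chain f E us"
    and "i < length us" "j < length us" "i \<noteq> j" "e \<in> set E"
  shows "tri f (us!i) (us!j) e = 0"
proof -
  have earlier: "tri f (us!k) (us!l) e = 0" if "l < k" "k < length us" for k l
  proof -
    have "take k us ! l = us!l" "l < length (take k us)" using that by auto
    then have "us!l \<in> set (take k us)" by (metis nth_mem)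
    with chain that \<open>e \<in> set E\<close> show ?thesis by (auto simp: tri_orthogonal_chain_def)
  qed
  show ?thesis
  proof (cases "i < j")
    case True
    with earlier[of i j] assms(3) show ?thesis by (simp add: tri_swap12[of f "us!i"])
  next
    case False
    with earlier[of j i] assms(2,4) show ?thesis by simp
  qed
qed

lemma tri_orthogonal_chain_lincomb_entries:
  assumes chain: "tri_orthogonal_chain f E us" and "e \<in> set E" "e' \<in> set E"
  shows "tri f (lincomb \<gamma> us) e e' = 0"
proof -
  have "tri f (us!j) e e' = 0" if "j < length us" for j
    using chain that assms(2,3) by (auto simp: tri_orthogonal_chain_def)
  with chain show ?thesis by (simp add: tri_orthogonal_chain_def tri_lincomb_left)
qed

lemma tri_orthogonal_chain_lincomb_diag:
  assumes chain: "tri_orthogonal_chain f E us" and e: "e \<in> set E"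
  shows "tri f (lincomb \<gamma> us) (lincomb \<delta> us) e = (\<Sum>i<length us. \<gamma> i * \<delta> i * tri f (us!i) (us!i) e)"
proof -
  have us: "set us \<subseteq> vecs" using chain by (simp add: tri_orthogonal_chain_def)
  have diag: "tri f (lincomb \<delta> us) (us!i) e = \<delta> i * tri f (us!i) (us!i) e" if "i < length us" for i
  proof -
    have "tri f (lincomb \<delta> us) (us!i) e = (\<Sum>j<length us. \<delta> j * tri f (us!j) (us!i) e)"
      by (rule tri_lincomb_left[OF us])
    also have "\<dots> = \<delta> i * tri f (us!i) (us!i) e + (\<Sum>j\<in>{..<length us} - {i}. \<delta> j * tri f (us!j) (us!i) e)"
      using that by (subst sum.remove[of _ i]) auto
    also have "(\<Sum>j\<in>{..<length us} - {i}. \<delta> j * tri f (us!j) (us!i) e) = 0"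
      using tri_orthogonal_chain_offdiag[OF chain _ that _ e] by (intro sum.neutral) auto
    finally show ?thesis by simp
  qed
  have "tri f (lincomb \<gamma> us) (lincomb \<delta> us) e = (\<Sum>i<length us. \<gamma> i * tri f (us!i) (lincomb \<delta> us) e)"
    by (rule tri_lincomb_left[OF us])
  also have "\<dots> = (\<Sum>i<length us. \<gamma> i * \<delta> i * tri f (us!i) (us!i) e)"
    using diag by (intro sum.cong refl) (simp add: tri_swap12[of f _ "lincomb \<delta> us"])
  finally show ?thesis .
qed

lemma exists_isotropic_in_square_span:
  fixes f :: "'i multiset \<Rightarrow> 'k::field"
  assumes alg_closed: "\<forall>p :: 'k poly. degree p > 0 \<longrightarrow> (\<exists>x. poly p x = 0)"
    and us: "set us \<subseteq> vecs" and disjoint: "\<And>i. \<alpha> i * \<beta> i = 0"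
    and \<alpha>: "\<exists>i<length us. \<alpha> i \<noteq> 0" and \<beta>: "\<exists>i<length us. \<beta> i \<noteq> 0"
  shows "\<exists>\<gamma> a b. (\<exists>i<length us. \<gamma> i \<noteq> 0) \<and>
           tri f (lincomb \<gamma> us) (lincomb \<gamma> us) (lincomb \<gamma> us) = 0 \<and>
           (\<forall>i. \<gamma> i * \<gamma> i = a * (\<alpha> i * \<alpha> i) + b * (\<beta> i * \<beta> i))"
proof -
  let ?A = "lincomb \<alpha> us" and ?B = "lincomb \<beta> us"
  show ?thesis
  proof (cases "tri f ?B ?B ?B = 0")
    case True
    with \<beta> show ?thesis by (intro exI[of _ \<beta>] exI[of _ 0] exI[of _ 1]) simp
  next
    case False
    let ?p = "[:tri f ?A ?A ?A, 3 * tri f ?A ?A ?B, 3 * tri f ?A ?B ?B, tri f ?B ?B ?B:]"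
    have "degree ?p > 0" using False by simp
    then obtain s where s: "poly ?p s = 0" using alg_closed by blast
    define \<gamma> where "\<gamma> i = \<alpha> i + s * \<beta> i" for i
    have "lincomb \<gamma> us = (\<lambda>i. ?A i + s * ?B i)"
      by (simp add: fun_eq_iff lincomb_def \<gamma>_def algebra_simps sum.distrib sum_distrib_left)
    then have "tri f (lincomb \<gamma> us) (lincomb \<gamma> us) (lincomb \<gamma> us) = 0"
      using s tri_pencil_cubic[OF lincomb_in_vecs[OF us] lincomb_in_vecs[OF us]] by simp
    moreover have "\<exists>i<length us. \<gamma> i \<noteq> 0"
    proof -
      obtain i where "i < length us" "\<alpha> i \<noteq> 0" using \<alpha> by blast
      moreover have "\<beta> i = 0" using disjoint[of i] \<open>\<alpha> i \<noteq> 0\<close> by simp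
      ultimately show ?thesis by (auto simp: \<gamma>_def)
    qed
    moreover have "\<gamma> i * \<gamma> i = 1 * (\<alpha> i * \<alpha> i) + (s * s) * (\<beta> i * \<beta> i)" for i
    proof -
      have "\<gamma> i * \<gamma> i = \<alpha> i * \<alpha> i + s * s * (\<beta> i * \<beta> i) + 2 * s * (\<alpha> i * \<beta> i)"
        by (simp add: \<gamma>_def algebra_simps)
      then show ?thesis using disjoint[of i] by simp
    qed
    ultimately show ?thesis by blast
  qed
qed

lemma exists_disjoint_square_solutions:
  fixes cs :: "(nat \<Rightarrow> 'k::field) list"
  assumes alg_closed: "\<forall>p :: 'k poly. degree p > 0 \<longrightarrow> (\<exists>x. poly p x = 0)"
    and "length cs < K"
  shows "\<exists>\<alpha> \<beta>. (\<forall>i. \<alpha> i * \<beta> i = 0) \<and> (\<exists>i<2 * K. \<alpha> i \<noteq> 0) \<and> (\<exists>i<2 * K. \<beta> i \<noteq> 0) \<and>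
     (\<forall>c\<in>set cs. (\<Sum>i<2 * K. \<alpha> i * \<alpha> i * c i) = 0 \<and> (\<Sum>i<2 * K. \<beta> i * \<beta> i * c i) = 0)"
proof -
  have cards: "length cs < card {..<K}" "length cs < card {K..<2 * K}" using assms(2) by simp_all
  have halves: "{..<K} \<subseteq> {..<2 * K}" "{K..<2 * K} \<subseteq> {..<2 * K}" by auto
  obtain \<alpha> where \<alpha>: "\<exists>i\<in>{..<K}. \<alpha> i \<noteq> 0" "\<forall>i. i \<notin> {..<K} \<longrightarrow> \<alpha> i = 0"
      "\<forall>c\<in>set cs. (\<Sum>i<2 * K. \<alpha> i * \<alpha> i * c i) = 0"
    using exists_nonzero_solution_in_squares[OF alg_closed finite_lessThan halves(1) cards(1)] by blast
  obtain \<beta> where \<beta>: "\<exists>i\<in>{K..<2 * K}. \<beta> i \<noteq> 0" "\<forall>i. i \<notin> {K..<2 * K} \<longrightarrow> \<beta> i = 0"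
      "\<forall>c\<in>set cs. (\<Sum>i<2 * K. \<beta> i * \<beta> i * c i) = 0"
    using exists_nonzero_solution_in_squares[OF alg_closed finite_lessThan halves(2) cards(2)] by blast
  have "\<alpha> i * \<beta> i = 0" for i
  proof (cases "i < K")
    case True
    then show ?thesis using \<beta>(2) by simp
  next
    case False
    then show ?thesis using \<alpha>(2) by simp
  qed
  moreover obtain i0 where "i0 < K" "\<alpha> i0 \<noteq> 0" using \<alpha>(1) by auto
  then have "\<exists>i<2 * K. \<alpha> i \<noteq> 0" by (intro exI[of _ i0]) simp
  moreover have "\<exists>i<2 * K. \<beta> i \<noteq> 0" using \<beta>(1) by auto
  ultimately show ?thesis using \<alpha>(3) \<beta>(3) by blast
qed

lemma tri_vanishes_on_snoc:
  assumes "tri f v v v = 0" "\<And>e. e \<in> set E \<Longrightarrow> tri f v v e = 0"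
    and "\<And>e e'. e \<in> set E \<Longrightarrow> e' \<in> set E \<Longrightarrow> tri f v e e' = 0"
  shows "\<forall>y\<in>set (E @ [v]). \<forall>z\<in>set (E @ [v]). tri f v y z = 0"
proof (intro ballI)
  fix y z assume "y \<in> set (E @ [v])" "z \<in> set (E @ [v])"
  then consider "y \<in> set E" "z \<in> set E" | "y \<in> set E" "z = v" | "y = v" "z \<in> set E" | "y = v" "z = v"
    by auto
  then show "tri f v y z = 0"
    by cases (use assms tri_swap23[of f v y v] in simp_all)
qed

lemma exists_isotropic_outside_span:
  fixes f :: "'i multiset \<Rightarrow> 'k::field"
  assumes alg_closed: "\<forall>p :: 'k poly. degree p > 0 \<longrightarrow> (\<exists>x. poly p x = 0)"
    and rrk: "rrk_infinite f" and E: "set E \<subseteq> vecs"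
  shows "\<exists>v\<in>vecs. qbar_outside_span f E v \<and> (\<forall>y\<in>set (E @ [v]). \<forall>z\<in>set (E @ [v]). tri f v y z = 0)"
proof -
  define K where "K = Suc (length E)"
  obtain us where len: "length us = 2 * K" and chain: "tri_orthogonal_chain f E us"
    using exists_tri_orthogonal_chain[OF rrk E] by blast
  have us: "set us \<subseteq> vecs" using chain by (simp add: tri_orthogonal_chain_def)
  define cs where "cs = map (\<lambda>e i. tri f (us!i) (us!i) e) E"
  have "length cs < K" by (simp add: cs_def K_def)
  then obtain \<alpha> \<beta> where disjoint: "\<And>i. \<alpha> i * \<beta> i = 0"
      and nonzero: "\<exists>i<length us. \<alpha> i \<noteq> 0" "\<exists>i<length us. \<beta> i \<noteq> 0"
      and squares: "\<forall>c\<in>set cs. (\<Sum>i<length us. \<alpha> i * \<alpha> i * c i) = 0 \<and> (\<Sum>i<length us. \<beta> i * \<beta> i * c i) = 0"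
    using exists_disjoint_square_solutions[OF alg_closed] unfolding len by blast
  have "\<exists>\<gamma> a b. (\<exists>i<length us. \<gamma> i \<noteq> 0) \<and>
      tri f (lincomb \<gamma> us) (lincomb \<gamma> us) (lincomb \<gamma> us) = 0 \<and>
      (\<forall>i. \<gamma> i * \<gamma> i = a * (\<alpha> i * \<alpha> i) + b * (\<beta> i * \<beta> i))"
    by (rule exists_isotropic_in_square_span[OF alg_closed us disjoint nonzero])
  then obtain \<gamma> a b where \<gamma>: "\<exists>i<length us. \<gamma> i \<noteq> 0"
      "tri f (lincomb \<gamma> us) (lincomb \<gamma> us) (lincomb \<gamma> us) = 0"
      "\<And>i. \<gamma> i * \<gamma> i = a * (\<alpha> i * \<alpha> i) + b * (\<beta> i * \<beta> i)"
    by blast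
  define v where "v = lincomb \<gamma> us"
  have "tri f v v e = 0" if "e \<in> set E" for e
  proof -
    let ?c = "\<lambda>i. tri f (us!i) (us!i) e"
    have "?c \<in> set cs" using that by (simp add: cs_def)
    with squares have "a * (\<Sum>i<length us. \<alpha> i * \<alpha> i * ?c i) + b * (\<Sum>i<length us. \<beta> i * \<beta> i * ?c i) = 0"
      by simp
    then have "(\<Sum>i<length us. (a * (\<alpha> i * \<alpha> i) + b * (\<beta> i * \<beta> i)) * ?c i) = 0"
      by (simp add: sum.distrib sum_distrib_left algebra_simps)
    then show ?thesis
      unfolding v_def tri_orthogonal_chain_lincomb_diag[OF chain that] \<gamma>(3) .
  qed
  moreover have "tri f v e e' = 0" if "e \<in> set E" "e' \<in> set E" for e e'
    using tri_orthogonal_chain_lincomb_entries[OF chain that] by (simp add: v_def)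
  moreover have "qbar_outside_span f E v"
    unfolding v_def using chain \<gamma>(1)
    by (intro qbar_chain_lincomb_outside_span) (auto simp: tri_orthogonal_chain_def)
  ultimately show ?thesis
    using tri_vanishes_on_snoc[of f v E] \<gamma>(2) lincomb_in_vecs[OF us] by (auto simp: v_def)
qed

theorem lemma4p5:
  fixes f :: "'i multiset \<Rightarrow> 'k::field"
    and T :: "(('i \<Rightarrow> 'k) \<times> ('i \<Rightarrow> 'k) list) list"
  assumes alg_closed: "\<forall>p :: 'k poly. degree p > 0 \<longrightarrow> (\<exists>x. poly p x = 0)"
    and char2: "(2::'k) \<noteq> 0" and char3: "(3::'k) \<noteq> 0"
    and cubic: "homog 3 f"
    and rrk: "rrk_infinite f"
    and good: "good_table f T"
  shows "\<exists>v. good_table f (T @ [(v, [])])"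
proof -
  have "set (entries T) \<subseteq> vecs" using good by (simp add: good_table_def)
  then obtain v where "v \<in> vecs" "qbar_outside_span f (entries T) v"
      "\<forall>y\<in>set (entries T @ [v]). \<forall>z\<in>set (entries T @ [v]). tri f v y z = 0"
    using exists_isotropic_outside_span[OF alg_closed rrk] by blast
  then show ?thesis using good_table_snoc[OF good] by blast
qed

end
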